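(* Let $G=(V,E)$ be a split graph. An edge $e\in E$ is split-safe (i.e., $G-e$ is a split graph) if and only if $e$ is neither the middle edge of an induced $P_4$ nor the middle edge of an induced diamond in $G$.
   Context: A split graph is a graph whose vertex set can be partitioned into a clique and an independent set. In a path $P_4$ the middle edge is the edge joining its two degree-2 vertices. A diamond is $K_4$ minus one edge; its middle edge is the edge joining its two degree-3 vertices. *)

theory Defs
  imports Main
begin

definition simple_graph :: "'a set \<Rightarrow> 'a set set \<Rightarrow> bool" where
  "simple_graph V E \<longleftrightarrow> finite V \<and>
     (\<forall>e\<in>E. \<exists>x y. x \<noteq> y \<and> x \<in> V \<and> y \<in> V \<and> e = {x, y})"

definition adj :: "'a set set \<Rightarrow> 'a \<Rightarrow> 'a \<Rightarrow> bool" where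
  "adj E x y \<longleftrightarrow> {x, y} \<in> E"

definition is_clique :: "'a set \<Rightarrow> 'a set set \<Rightarrow> 'a set \<Rightarrow> bool" where
  "is_clique V E K \<longleftrightarrow> K \<subseteq> V \<and> (\<forall>x\<in>K. \<forall>y\<in>K. x \<noteq> y \<longrightarrow> adj E x y)"

definition is_independent :: "'a set \<Rightarrow> 'a set set \<Rightarrow> 'a set \<Rightarrow> bool" where
  "is_independent V E I \<longleftrightarrow> I \<subseteq> V \<and> (\<forall>x\<in>I. \<forall>y\<in>I. \<not> adj E x y)"

definition split_graph :: "'a set \<Rightarrow> 'a set set \<Rightarrow> bool" where
  "split_graph V E \<longleftrightarrow> simple_graph V E \<and>
     (\<exists>K I. K \<union> I = V \<and> K \<inter> I = {} \<and> is_clique V E K \<and> is_independent V E I)"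

definition P4_middle :: "'a set \<Rightarrow> 'a set set \<Rightarrow> 'a \<Rightarrow> 'a \<Rightarrow> bool" where
  "P4_middle V E u v \<longleftrightarrow> (\<exists>a b. a \<in> V \<and> b \<in> V \<and> u \<in> V \<and> v \<in> V \<and> distinct [a, u, v, b] \<and>
     adj E a u \<and> adj E u v \<and> adj E v b \<and>
     \<not> adj E a v \<and> \<not> adj E u b \<and> \<not> adj E a b)"

definition diamond_middle :: "'a set \<Rightarrow> 'a set set \<Rightarrow> 'a \<Rightarrow> 'a \<Rightarrow> bool" where
  "diamond_middle V E u v \<longleftrightarrow> (\<exists>a b. a \<in> V \<and> b \<in> V \<and> u \<in> V \<and> v \<in> V \<and> distinct [a, u, v, b] \<and>
     adj E u v \<and> adj E a u \<and> adj E a v \<and> adj E b u \<and> adj E b v \<and> \<not> adj E a b)"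

end

theory Submission
  imports Defs
begin

text \<open>A split partition (K, I) of G remains one after deleting any edge that does not lie
  inside K, so G - e is split as soon as some split partition of G has e outside its clique.
  If e = xy lies inside K, the neighbourhoods of x and y in I are nested, for otherwise
  e is the middle edge of an induced P4.  The endpoint u with the smaller neighbourhood
  can then leave the clique: directly if it has no neighbour in I, and otherwise by
  swapping places with its neighbour a in I, because the absence of a diamond with middle
  edge e forces a to be the only neighbour of u in I and to be adjacent to all of K - u.
  Conversely, deleting the middle edge of an induced P4 or diamond leaves an induced
  2K2 or C4, and neither has a split partition.\<close>

definition split_partition :: "'a set \<Rightarrow> 'a set set \<Rightarrow> 'a set \<Rightarrow> 'a set \<Rightarrow> bool" where
  "split_partition V E K I \<longleftrightarrow>
     K \<union> I = V \<and> K \<inter> I = {} \<and> is_clique V E K \<and> is_independent V E I"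

lemma split_graph_iff:
  "split_graph V E \<longleftrightarrow> simple_graph V E \<and> (\<exists>K I. split_partition V E K I)"
  unfolding split_graph_def split_partition_def by blast

lemma adj_commute: "adj E x y \<longleftrightarrow> adj E y x"
  unfolding adj_def by (simp add: insert_commute)

lemma not_adj_self: "simple_graph V E \<Longrightarrow> \<not> adj E x x"
  unfolding simple_graph_def adj_def by (auto simp: doubleton_eq_iff)

lemma adj_imp_neq: "simple_graph V E \<Longrightarrow> adj E x y \<Longrightarrow> x \<noteq> y"
  using not_adj_self by metis

lemma adj_Diff_singleton: "adj (E - {e}) x y \<longleftrightarrow> adj E x y \<and> {x, y} \<noteq> e"
  unfolding adj_def by auto

lemma simple_graph_Diff: "simple_graph V E \<Longrightarrow> simple_graph V (E - F)"
  unfolding simple_graph_def by auto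

lemma split_partition_no_induced_2K2:
  assumes "split_partition V E K I"
    and "a \<in> V" "u \<in> V" "v \<in> V" "b \<in> V" "distinct [a, u, v, b]"
    and "adj E a u" "adj E v b"
    and "\<not> adj E a v" "\<not> adj E a b" "\<not> adj E u v" "\<not> adj E u b"
  shows False
proof -
  have "a \<in> K \<or> u \<in> K" "v \<in> K \<or> b \<in> K"
    using assms unfolding split_partition_def is_independent_def by blast+
  moreover have "\<not> (x \<in> K \<and> y \<in> K)" if "x \<in> {a, u}" "y \<in> {v, b}" for x y
    using assms that unfolding split_partition_def is_clique_def by auto
  ultimately show False by blast
qed

lemma split_partition_no_induced_C4:
  assumes "split_partition V E K I"
    and "a \<in> V" "u \<in> V" "v \<in> V" "b \<in> V" "distinct [a, u, v, b]"
    and "adj E a u" "adj E a v" "adj E b u" "adj E b v"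
    and "\<not> adj E a b" "\<not> adj E u v"
  shows False
proof -
  have "a \<in> K \<or> u \<in> K" "a \<in> K \<or> v \<in> K" "b \<in> K \<or> u \<in> K" "b \<in> K \<or> v \<in> K"
    using assms unfolding split_partition_def is_independent_def by blast+
  moreover have "\<not> (a \<in> K \<and> b \<in> K)" "\<not> (u \<in> K \<and> v \<in> K)"
    using assms unfolding split_partition_def is_clique_def by auto
  ultimately show False by blast
qed

lemma P4_middle_Diff_not_split_partition:
  assumes "P4_middle V E u v"
  shows "\<not> split_partition V (E - {{u, v}}) K I"
proof
  assume split: "split_partition V (E - {{u, v}}) K I"
  from assms obtain a b where "a \<in> V" "b \<in> V" "u \<in> V" "v \<in> V" "distinct [a, u, v, b]"
    "adj E a u" "adj E v b" "\<not> adj E a v" "\<not> adj E u b" "\<not> adj E a b"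
    unfolding P4_middle_def by blast
  then show False
    by (intro split_partition_no_induced_2K2[OF split, of a u v b])
       (auto simp: adj_Diff_singleton doubleton_eq_iff)
qed

lemma diamond_middle_Diff_not_split_partition:
  assumes "diamond_middle V E u v"
  shows "\<not> split_partition V (E - {{u, v}}) K I"
proof
  assume split: "split_partition V (E - {{u, v}}) K I"
  from assms obtain a b where "a \<in> V" "b \<in> V" "u \<in> V" "v \<in> V" "distinct [a, u, v, b]"
    "adj E a u" "adj E a v" "adj E b u" "adj E b v" "\<not> adj E a b"
    unfolding diamond_middle_def by blast
  then show False
    by (intro split_partition_no_induced_C4[OF split, of a u v b])
       (auto simp: adj_Diff_singleton doubleton_eq_iff)
qed

lemma split_partition_Diff_edge:
  assumes "split_partition V E K I" and "\<not> e \<subseteq> K"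
  shows "split_partition V (E - {e}) K I"
  using assms unfolding split_partition_def is_clique_def is_independent_def
  by (auto simp: adj_Diff_singleton)

lemma split_partition_move_to_independent:
  assumes "simple_graph V E" "split_partition V E K I"
    and "u \<in> K" "\<forall>w\<in>I. \<not> adj E u w"
  shows "split_partition V E (K - {u}) (insert u I)"
  using assms not_adj_self[OF assms(1)]
  unfolding split_partition_def is_clique_def is_independent_def
  by (auto simp: adj_commute)

lemma split_partition_swap:
  assumes "simple_graph V E" "split_partition V E K I"
    and "u \<in> K" "a \<in> I"
    and "\<forall>c\<in>K - {u}. adj E a c" "\<forall>w\<in>I - {a}. \<not> adj E u w"
  shows "split_partition V E (insert a (K - {u})) (insert u (I - {a}))"
  using assms not_adj_self[OF assms(1)]
  unfolding split_partition_def is_clique_def is_independent_def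
  by (auto simp: adj_commute)

lemma split_partition_swap_dominated:
  assumes simple: "simple_graph V E" and split: "split_partition V E K I"
    and "u \<in> K" "v \<in> K" "u \<noteq> v" and a: "a \<in> I" "adj E u a"
    and dominated: "\<forall>w\<in>I. adj E u w \<longrightarrow> adj E v w"
    and no_diamond: "\<not> diamond_middle V E u v"
  shows "split_partition V E (insert a (K - {u})) (insert u (I - {a}))"
proof (rule split_partition_swap[OF simple split \<open>u \<in> K\<close> \<open>a \<in> I\<close>])
  have K: "adj E c d" if "c \<in> K" "d \<in> K" "c \<noteq> d" for c d
    using split that unfolding split_partition_def is_clique_def by blast
  have I: "\<not> adj E c d" if "c \<in> I" "d \<in> I" for c d
    using split that unfolding split_partition_def is_independent_def by blast
  have "a \<notin> K" "K \<subseteq> V" "I \<subseteq> V"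
    using split a unfolding split_partition_def by auto
  show "\<forall>w\<in>I - {a}. \<not> adj E u w"
  proof (intro ballI notI)
    fix w assume "w \<in> I - {a}" "adj E u w"
    with dominated have "diamond_middle V E u v"
      unfolding diamond_middle_def
      using assms \<open>a \<notin> K\<close> \<open>K \<subseteq> V\<close> \<open>I \<subseteq> V\<close> K I
      by (intro exI[of _ a] exI[of _ w]) (auto simp: adj_commute)
    with no_diamond show False ..
  qed
  have "adj E a v" using dominated a by (simp add: adj_commute)
  show "\<forall>c\<in>K - {u}. adj E a c"
  proof (intro ballI)
    fix c assume c: "c \<in> K - {u}"
    show "adj E a c"
    proof (cases "c = v")
      case True
      with \<open>adj E a v\<close> show ?thesis by simp
    next
      case False
      show ?thesis
      proof (rule ccontr)
        assume "\<not> adj E a c"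
        with c False \<open>adj E a v\<close> have "diamond_middle V E u v"
          unfolding diamond_middle_def
          using assms \<open>a \<notin> K\<close> \<open>K \<subseteq> V\<close> \<open>I \<subseteq> V\<close> K
          by (intro exI[of _ a] exI[of _ c]) (auto simp: adj_commute)
        with no_diamond show False ..
      qed
    qed
  qed
qed

lemma dominated_vertex_leaves_clique:
  assumes simple: "simple_graph V E" and split: "split_partition V E K I"
    and "u \<in> K" "v \<in> K" "u \<noteq> v"
    and "\<forall>w\<in>I. adj E u w \<longrightarrow> adj E v w"
    and "\<not> diamond_middle V E u v"
  obtains K' I' where "split_partition V E K' I'" "u \<notin> K'"
proof (cases "\<exists>a\<in>I. adj E u a")
  case True
  then obtain a where "a \<in> I" "adj E u a" by blast
  then have "split_partition V E (insert a (K - {u})) (insert u (I - {a}))"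
    using split_partition_swap_dominated[OF assms(1-5)] assms(6,7) by blast
  moreover have "u \<notin> insert a (K - {u})"
    using split \<open>a \<in> I\<close> \<open>u \<in> K\<close> unfolding split_partition_def by blast
  ultimately show ?thesis using that by blast
next
  case False
  then show ?thesis
    using that split_partition_move_to_independent[OF simple split \<open>u \<in> K\<close>] by blast
qed

lemma split_partition_avoiding_edge:
  assumes simple: "simple_graph V E" and split: "split_partition V E K I"
    and "adj E x y" "\<not> P4_middle V E x y"
    and "\<not> diamond_middle V E x y" "\<not> diamond_middle V E y x"
  obtains K' I' where "split_partition V E K' I'" "\<not> {x, y} \<subseteq> K'"
proof (cases "{x, y} \<subseteq> K")
  case False
  with split that show ?thesis by blast
next
  case True
  then have "x \<in> K" "y \<in> K" by auto
  have "x \<noteq> y" using adj_imp_neq[OF simple \<open>adj E x y\<close>] .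
  have nested: "(\<forall>w\<in>I. adj E x w \<longrightarrow> adj E y w) \<or> (\<forall>w\<in>I. adj E y w \<longrightarrow> adj E x w)"
  proof (rule ccontr)
    assume "\<not> ?thesis"
    then obtain a b where ab: "a \<in> I" "adj E x a" "\<not> adj E y a" "b \<in> I" "adj E y b" "\<not> adj E x b"
      by blast
    have "a \<notin> K" "b \<notin> K" "\<not> adj E a b" "K \<subseteq> V" "I \<subseteq> V"
      using split ab unfolding split_partition_def is_independent_def by auto
    with ab \<open>x \<in> K\<close> \<open>y \<in> K\<close> \<open>adj E x y\<close> \<open>x \<noteq> y\<close> have "P4_middle V E x y"
      unfolding P4_middle_def
      by (intro exI[of _ a] exI[of _ b]) (auto simp: adj_commute)
    with assms(4) show False ..
  qed
  then show ?thesis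
  proof
    assume "\<forall>w\<in>I. adj E x w \<longrightarrow> adj E y w"
    then obtain K' I' where "split_partition V E K' I'" "x \<notin> K'"
      using dominated_vertex_leaves_clique[OF simple split \<open>x \<in> K\<close> \<open>y \<in> K\<close> \<open>x \<noteq> y\<close>] assms(5)
      by blast
    with that show ?thesis by blast
  next
    assume "\<forall>w\<in>I. adj E y w \<longrightarrow> adj E x w"
    then obtain K' I' where "split_partition V E K' I'" "y \<notin> K'"
      using dominated_vertex_leaves_clique[OF simple split \<open>y \<in> K\<close> \<open>x \<in> K\<close> \<open>x \<noteq> y\<close>[symmetric]]
        assms(6)
      by blast
    with that show ?thesis by blast
  qed
qed

theorem lemma4p2:
  fixes V :: "'a set" and E :: "'a set set" and e :: "'a set"
  assumes "split_graph V E" and "e \<in> E"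
  shows "split_graph V (E - {e}) \<longleftrightarrow>
         \<not> (\<exists>u v. e = {u, v} \<and> (P4_middle V E u v \<or> diamond_middle V E u v))"
proof
  assume "split_graph V (E - {e})"
  then obtain K I where "split_partition V (E - {e}) K I"
    unfolding split_graph_iff by blast
  then show "\<not> (\<exists>u v. e = {u, v} \<and> (P4_middle V E u v \<or> diamond_middle V E u v))"
    by (auto dest: P4_middle_Diff_not_split_partition diamond_middle_Diff_not_split_partition)
next
  assume no_middle: "\<not> (\<exists>u v. e = {u, v} \<and> (P4_middle V E u v \<or> diamond_middle V E u v))"
  from assms(1) obtain K I where simple: "simple_graph V E" and "split_partition V E K I"
    unfolding split_graph_iff by blast
  moreover obtain x y where e: "e = {x, y}"
    using simple assms(2) unfolding simple_graph_def by blast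
  moreover have "adj E x y" using assms(2) e by (simp add: adj_def)
  moreover have "\<not> P4_middle V E x y" "\<not> diamond_middle V E x y" "\<not> diamond_middle V E y x"
    using no_middle e by (auto simp: insert_commute)
  ultimately obtain K' I' where "split_partition V E K' I'" "\<not> e \<subseteq> K'"
    using split_partition_avoiding_edge by metis
  then show "split_graph V (E - {e})"
    using split_partition_Diff_edge simple_graph_Diff[OF simple] split_graph_iff by blast
qed

end
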